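(* Let $\mathfrak{I}=(\mathcal{I},[\mathcal{F}_1,\dots,\mathcal{F}_k],\mathcal{X},\pi,\sim,\mathcal{S})$ be a domain constrained interpretation and $C_1,\dots,C_4,D_1,\dots,D_4$ natural concepts that are fully specified by their features in $\mathfrak{I}$, i.e. $N^{\mathcal{I}}=\{d\in\Delta^{\mathcal{I}}\mid\varphi(N)\subseteq\pi(d)\}$ for each of them. Suppose $C_1^{\mathcal{I}}\neq\emptyset$ and $\mathfrak{I}$ satisfies the analogy assertions $C_1:C_2::C_3:C_4$, $D_1:D_2::D_3:D_4$, $D_1:D_3::D_2:D_4$ and the concept inclusions $C_1\sqsubseteq D_1$, $C_2\sqsubseteq D_2$, $C_3\sqsubseteq D_3$. Then $\mathfrak{I}$ also satisfies $C_4\sqsubseteq D_4$.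
   Context: Concepts: $C,D::=\top\mid\bot\mid A\mid C\sqcap D\mid \exists r.C\mid N$; natural concepts: $N,N'::=A'\mid N\sqcap N'\mid N\bowtie N'\mid \exists r'.N$, with $A$ a concept name, $A'$ a natural concept name, $r$ a role name, $r'$ an intra-domain role name. A domain constrained interpretation is $\mathfrak{I}=(\mathcal{I},[\mathcal{F}_1,\dots,\mathcal{F}_k],\mathcal{X},\pi,\sim,\mathcal{S})$ where $\mathcal{I}=(\Delta^{\mathcal{I}},\cdot^{\mathcal{I}})$ is a classical DL interpretation, $[\mathcal{F}_1,\dots,\mathcal{F}_k]$ partitions a nonempty finite set $\mathcal{F}$, $\mathcal{X}\subseteq2^{\mathcal{F}}$ with $\mathcal{F}\in\mathcal{X}$, $\pi:\Delta^{\mathcal{I}}\to2^{\mathcal{F}}$, $\sim$ an equivalence relation on $\{1,\dots,k\}$, $\mathcal{S}=\{\sigma_{(s,t)}\mid(s,t)\in\sim\}$ with $\sigma_{(s,t)}:\mathcal{F}_s\to\mathcal{F}_t$ bijections. With $\mathcal{C}=\{G\subseteq\mathcal{F}\mid X\not\subseteq G\ \forall X\in\mathcal{X}\}$ and $\mathcal{C}^i=\{G\in\mathcal{C}\mid G\subseteq\mathcal{F}_i\}$ it is required: (1) $X\not\subseteq\pi(d)$ for all $d$, $X\in\mathcal{X}$; (2) each $G\in\mathcal{C}$ is $\pi(d)$ for some $d$; (3) $\sigma_{(s,t)}^{-1}=\sigma_{(t,s)}$, $\sigma_{(t,u)}\circ\sigma_{(s,t)}=\sigma_{(s,u)}$;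 (4) $\sigma_{(i,j)}(G)\in\mathcal{C}$ for $G\in\mathcal{C}^i$, $(i,j)\in\sim$; (5) $\{f,g\}\in\mathcal{X}$ whenever $f\in\mathcal{F}_i$, $g\in\mathcal{F}_j$, $(i,j)\in\sim$, $i\neq j$. $\varphi(C)=\bigcap\{\pi(d)\mid d\in C^{\mathcal{I}}\}$ ($=\mathcal{F}$ if $C^{\mathcal{I}}=\emptyset$). Concepts are interpreted as usual, with $(N\bowtie N')^{\mathcal{I}}=\{d\mid\varphi(N)\cap\varphi(N')\subseteq\pi(d)\}$, and every intra-domain role name $r$ interpreted as an intra-domain relation: there is $\kappa_r:2^{\mathcal{F}}\to2^{\mathcal{F}}$ with $(\exists r.C)^{\mathcal{I}}=\{d\mid\kappa_r(\varphi(C))\subseteq\pi(d)\}$ for all $C$, $\kappa_r(G)=\bigcup_i\kappa_r(G\cap\mathcal{F}_i)$ for $G\in\mathcal{C}$, $\kappa_r(G)\subseteq\mathcal{F}_i$ for $G\in\mathcal{C}^i$, $\kappa_r(\sigma_{(i,j)}(G))=\sigma_{(i,j)}(\kappa_r(G))$ for $(i,j)\in\sim$, $G\in\mathcal{C}^i$, and $\kappa_r(G)\neq\emptyset$ for $G\in\mathcal{C}^i\setminus\{\emptyset\}$. $\delta(C)=\{i\mid\mathcal{F}_i\cap\varphi(C)\neq\emptyset\}$. For $U=\{(s_1,t_1),\dots,(s_l,t_l)\}\subseteq\sim$ with pairwise distinct $s_i$ and pairwise distinct $t_i$, the domain translation $\sigma_U:\mathcal{F}\to\mathcal{F}$ maps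 $f\in\mathcal{F}_{s_i}$ to $\sigma_{(s_i,t_i)}(f)$ and fixes all other features; $\mathrm{src}(U)=\{s_i\}$, $\mathrm{tgt}(U)=\{t_i\}$. $\mu(C,D)$ is the set of $\sigma_U$ with $\varphi(D)=\sigma_U(\varphi(C))$, $\mathrm{src}(U)\subseteq\delta(C)$, $\mathrm{tgt}(U)\cap(\delta(C)\setminus\mathrm{src}(U))=\emptyset$. An analogy assertion $C_1:C_2::D_1:D_2$ is satisfied in $\mathfrak{I}$ iff $\mu(C_1,C_2)\cap\mu(D_1,D_2)\neq\emptyset$; a concept inclusion $C\sqsubseteq D$ is satisfied iff $C^{\mathcal{I}}\subseteq D^{\mathcal{I}}$. *)

theory Defs
  imports Main
begin

text \<open>Concept names 'c, role names 'r. Bowtie is only allowed on natural concepts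
(see wf_concept / natural).\<close>

datatype ('c, 'r) concept =
    Top
  | Bot
  | CName 'c
  | Conj "('c, 'r) concept" "('c, 'r) concept"
  | Ex 'r "('c, 'r) concept"
  | Bowtie "('c, 'r) concept" "('c, 'r) concept"

text \<open>The domain Delta is the whole type 'd. The partition is F_1..F_k given by
  parts i for i in {1..k}. sim is the relation on {1..k}, sigma s t the bijection
  sigma_(s,t). nat_names / intra_roles are the natural concept names and intra-domain
  role names of the signature.\<close>

record ('d, 'c, 'r, 'f) dci =
  nat_names :: "'c set"
  intra_roles :: "'r set"
  cint :: "'c \<Rightarrow> 'd set"
  rint :: "'r \<Rightarrow> ('d \<times> 'd) set"
  kk :: nat
  parts :: "nat \<Rightarrow> 'f set"
  Xs :: "'f set set"
  pi :: "'d \<Rightarrow> 'f set"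
  sim :: "(nat \<times> nat) set"
  sigma :: "nat \<Rightarrow> nat \<Rightarrow> 'f \<Rightarrow> 'f"

definition feats :: "('d, 'c, 'r, 'f) dci \<Rightarrow> 'f set" where
  "feats I = (\<Union>i\<in>{1..kk I}. parts I i)"

definition consistent_sets :: "('d, 'c, 'r, 'f) dci \<Rightarrow> 'f set set" where
  "consistent_sets I = {G. G \<subseteq> feats I \<and> (\<forall>X\<in>Xs I. \<not> X \<subseteq> G)}"

definition consistent_sets_in :: "('d, 'c, 'r, 'f) dci \<Rightarrow> nat \<Rightarrow> 'f set set" where
  "consistent_sets_in I i = {G \<in> consistent_sets I. G \<subseteq> parts I i}"

text \<open>phi(S) for a set S of individuals (phi(C) = phi(C^I)).\<close>
definition phi :: "('d, 'c, 'r, 'f) dci \<Rightarrow> 'd set \<Rightarrow> 'f set" where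
  "phi I S = (if S = {} then feats I else (\<Inter>d\<in>S. pi I d))"

fun ext :: "('d, 'c, 'r, 'f) dci \<Rightarrow> ('c, 'r) concept \<Rightarrow> 'd set" where
  "ext I Top = UNIV"
| "ext I Bot = {}"
| "ext I (CName A) = cint I A"
| "ext I (Conj C D) = ext I C \<inter> ext I D"
| "ext I (Ex r C) = {d. \<exists>e. (d, e) \<in> rint I r \<and> e \<in> ext I C}"
| "ext I (Bowtie N N') = {d. phi I (ext I N) \<inter> phi I (ext I N') \<subseteq> pi I d}"

fun natural :: "'c set \<Rightarrow> 'r set \<Rightarrow> ('c, 'r) concept \<Rightarrow> bool" where
  "natural NC IR (CName A) = (A \<in> NC)"
| "natural NC IR (Conj N N') = (natural NC IR N \<and> natural NC IR N')"
| "natural NC IR (Bowtie N N') = (natural NC IR N \<and> natural NC IR N')"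
| "natural NC IR (Ex r N) = (r \<in> IR \<and> natural NC IR N)"
| "natural NC IR Top = False"
| "natural NC IR Bot = False"

fun wf_concept :: "'c set \<Rightarrow> 'r set \<Rightarrow> ('c, 'r) concept \<Rightarrow> bool" where
  "wf_concept NC IR Top = True"
| "wf_concept NC IR Bot = True"
| "wf_concept NC IR (CName A) = True"
| "wf_concept NC IR (Conj C D) = (wf_concept NC IR C \<and> wf_concept NC IR D)"
| "wf_concept NC IR (Ex r C) = wf_concept NC IR C"
| "wf_concept NC IR (Bowtie N N') = (natural NC IR N \<and> natural NC IR N')"

definition intra_domain :: "('d, 'c, 'r, 'f) dci \<Rightarrow> 'r \<Rightarrow> bool" where
  "intra_domain I r \<longleftrightarrow> (\<exists>\<kappa> :: 'f set \<Rightarrow> 'f set.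
     (\<forall>G. G \<subseteq> feats I \<longrightarrow> \<kappa> G \<subseteq> feats I) \<and>
     (\<forall>C. wf_concept (nat_names I) (intra_roles I) C \<longrightarrow>
        ext I (Ex r C) = {d. \<kappa> (phi I (ext I C)) \<subseteq> pi I d}) \<and>
     (\<forall>G\<in>consistent_sets I. \<kappa> G = (\<Union>i\<in>{1..kk I}. \<kappa> (G \<inter> parts I i))) \<and>
     (\<forall>i\<in>{1..kk I}. \<forall>G\<in>consistent_sets_in I i. \<kappa> G \<subseteq> parts I i) \<and>
     (\<forall>i j G. (i, j) \<in> sim I \<longrightarrow> G \<in> consistent_sets_in I i \<longrightarrow>
        \<kappa> (sigma I i j ` G) = sigma I i j ` (\<kappa> G)) \<and>
     (\<forall>i\<in>{1..kk I}. \<forall>G\<in>consistent_sets_in I i. G \<noteq> {} \<longrightarrow> \<kappa> G \<noteq> {}))"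

definition is_dci :: "('d, 'c, 'r, 'f) dci \<Rightarrow> bool" where
  "is_dci I \<longleftrightarrow>
     \<comment> \<open>partition of a nonempty finite feature set\<close>
     finite (feats I) \<and> feats I \<noteq> {} \<and>
     (\<forall>i\<in>{1..kk I}. parts I i \<noteq> {}) \<and>
     (\<forall>i\<in>{1..kk I}. \<forall>j\<in>{1..kk I}. i \<noteq> j \<longrightarrow> parts I i \<inter> parts I j = {}) \<and>
     \<comment> \<open>X is a set of subsets of F containing F\<close>
     Xs I \<subseteq> Pow (feats I) \<and> feats I \<in> Xs I \<and>
     (\<forall>d. pi I d \<subseteq> feats I) \<and>
     equiv {1..kk I} (sim I) \<and>
     (\<forall>(s, t)\<in>sim I. bij_betw (sigma I s t) (parts I s) (parts I t)) \<and>
     \<comment> \<open>(1)\<close>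
     (\<forall>d. \<forall>X\<in>Xs I. \<not> X \<subseteq> pi I d) \<and>
     \<comment> \<open>(2)\<close>
     (\<forall>G\<in>consistent_sets I. \<exists>d. pi I d = G) \<and>
     \<comment> \<open>(3)\<close>
     (\<forall>s t. (s, t) \<in> sim I \<longrightarrow> (\<forall>f\<in>parts I s. sigma I t s (sigma I s t f) = f)) \<and>
     (\<forall>s t u. (s, t) \<in> sim I \<longrightarrow> (t, u) \<in> sim I \<longrightarrow>
        (\<forall>f\<in>parts I s. sigma I t u (sigma I s t f) = sigma I s u f)) \<and>
     \<comment> \<open>(4)\<close>
     (\<forall>i j G. (i, j) \<in> sim I \<longrightarrow> G \<in> consistent_sets_in I i \<longrightarrow>
        sigma I i j ` G \<in> consistent_sets I) \<and>
     \<comment> \<open>(5)\<close>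
     (\<forall>i j f g. (i, j) \<in> sim I \<longrightarrow> i \<noteq> j \<longrightarrow> f \<in> parts I i \<longrightarrow> g \<in> parts I j \<longrightarrow>
        {f, g} \<in> Xs I) \<and>
     \<comment> \<open>intra-domain role names are interpreted as intra-domain relations\<close>
     (\<forall>r\<in>intra_roles I. intra_domain I r)"

definition delta :: "('d, 'c, 'r, 'f) dci \<Rightarrow> ('c, 'r) concept \<Rightarrow> nat set" where
  "delta I C = {i\<in>{1..kk I}. parts I i \<inter> phi I (ext I C) \<noteq> {}}"

definition admissible_U :: "('d, 'c, 'r, 'f) dci \<Rightarrow> (nat \<times> nat) set \<Rightarrow> bool" where
  "admissible_U I U \<longleftrightarrow> U \<subseteq> sim I \<and> inj_on fst U \<and> inj_on snd U"

definition dom_trans :: "('d, 'c, 'r, 'f) dci \<Rightarrow> (nat \<times> nat) set \<Rightarrow> 'f \<Rightarrow> 'f" where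
  "dom_trans I U f =
     (if \<exists>p\<in>U. f \<in> parts I (fst p)
      then (let p = (THE p. p \<in> U \<and> f \<in> parts I (fst p)) in sigma I (fst p) (snd p) f)
      else f)"

definition mu :: "('d, 'c, 'r, 'f) dci \<Rightarrow> ('c, 'r) concept \<Rightarrow> ('c, 'r) concept
                   \<Rightarrow> ('f \<Rightarrow> 'f) set" where
  "mu I C D = {dom_trans I U | U. admissible_U I U \<and>
       phi I (ext I D) = dom_trans I U ` phi I (ext I C) \<and>
       fst ` U \<subseteq> delta I C \<and>
       snd ` U \<inter> (delta I C - fst ` U) = {}}"

definition sat_analogy :: "('d, 'c, 'r, 'f) dci \<Rightarrow> ('c, 'r) concept \<Rightarrow> ('c, 'r) concept
                           \<Rightarrow> ('c, 'r) concept \<Rightarrow> ('c, 'r) concept \<Rightarrow> bool" where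
  "sat_analogy I C1 C2 D1 D2 \<longleftrightarrow> mu I C1 C2 \<inter> mu I D1 D2 \<noteq> {}"

definition sat_inclusion :: "('d, 'c, 'r, 'f) dci \<Rightarrow> ('c, 'r) concept \<Rightarrow> ('c, 'r) concept \<Rightarrow> bool" where
  "sat_inclusion I C D \<longleftrightarrow> ext I C \<subseteq> ext I D"

definition fully_specified :: "('d, 'c, 'r, 'f) dci \<Rightarrow> ('c, 'r) concept \<Rightarrow> bool" where
  "fully_specified I N \<longleftrightarrow> ext I N = {d. phi I (ext I N) \<subseteq> pi I d}"

definition nat_fs :: "('d, 'c, 'r, 'f) dci \<Rightarrow> ('c, 'r) concept \<Rightarrow> bool" where
  "nat_fs I N \<longleftrightarrow> natural (nat_names I) (intra_roles I) N \<and> fully_specified I N"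

end

theory Submission
  imports Defs
begin

text \<open>
  Write \<open>c\<^sub>i\<close> and \<open>d\<^sub>i\<close> for the feature sets of \<open>C\<^sub>i\<close> and \<open>D\<^sub>i\<close>; the inclusions give
  \<open>d\<^sub>i \<subseteq> c\<^sub>i\<close>, and for fully specified concepts \<open>C\<^sub>4 \<sqsubseteq> D\<^sub>4\<close> amounts to \<open>d\<^sub>4 \<subseteq> c\<^sub>4\<close>. Let \<open>\<tau>\<close>,
  \<open>\<rho>\<close>, \<open>\<nu>\<close> witness the three analogies, so \<open>c\<^sub>4 = \<tau>(c\<^sub>3)\<close>, \<open>d\<^sub>4 = \<rho>(d\<^sub>3)\<close> and \<open>d\<^sub>3 = \<nu>(d\<^sub>1)\<close>.
  Since \<open>C\<^sub>1\<close> has an instance, \<open>c\<^sub>1\<close> meets at most one part of each \<open>\<sim>\<close>-class. Hence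
  \<open>\<rho>(d\<^sub>1) = d\<^sub>2 \<subseteq> c\<^sub>2 = \<tau>(c\<^sub>1)\<close> forces \<open>\<tau>\<close> and \<open>\<rho>\<close> to be the same bijection on every part
  that meets \<open>d\<^sub>1\<close>, and on the parts \<open>\<nu>\<close> moves \<open>d\<^sub>1\<close> to that do not meet \<open>d\<^sub>1\<close> both are
  the identity. So \<open>\<rho>\<close> agrees with \<open>\<tau>\<close> on \<open>d\<^sub>3 \<subseteq> c\<^sub>3\<close>, and \<open>d\<^sub>4 = \<rho>(d\<^sub>3) \<subseteq> \<tau>(c\<^sub>3) = c\<^sub>4\<close>.
\<close>

lemma phi_subset_pi: "d \<in> S \<Longrightarrow> phi I S \<subseteq> pi I d"
  unfolding phi_def by auto

lemma mu_image: "g \<in> mu I C D \<Longrightarrow> phi I (ext I D) = g ` phi I (ext I C)"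
  unfolding mu_def by blast

lemma sat_inclusion_if_fully_specified:
  assumes "fully_specified I C" "fully_specified I D"
    and "phi I (ext I D) \<subseteq> phi I (ext I C)"
  shows "sat_inclusion I C D"
  using assms unfolding fully_specified_def sat_inclusion_def by blast

definition part_translation :: "('d, 'c, 'r, 'f) dci \<Rightarrow> ('f \<Rightarrow> 'f) \<Rightarrow> bool" where
  "part_translation I g \<longleftrightarrow>
     (\<forall>a\<in>{1..kk I}. \<exists>t. (a, t) \<in> sim I \<and> (\<forall>f\<in>parts I a. g f = sigma I a t f))"

locale dc_interpretation =
  fixes I :: "('d, 'c, 'r, 'f) dci"
  assumes parts_disjoint:
      "\<forall>i\<in>{1..kk I}. \<forall>j\<in>{1..kk I}. i \<noteq> j \<longrightarrow> parts I i \<inter> parts I j = {}"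
    and pi_feats: "\<forall>d. pi I d \<subseteq> feats I"
    and sim_equiv: "equiv {1..kk I} (sim I)"
    and sigma_bij: "\<forall>(s, t)\<in>sim I. bij_betw (sigma I s t) (parts I s) (parts I t)"
    and pi_consistent: "\<forall>d. \<forall>X\<in>Xs I. \<not> X \<subseteq> pi I d"
    and sigma_inv: "\<forall>s t. (s, t) \<in> sim I \<longrightarrow> (\<forall>f\<in>parts I s. sigma I t s (sigma I s t f) = f)"
    and sigma_trans: "\<forall>s t u. (s, t) \<in> sim I \<longrightarrow> (t, u) \<in> sim I \<longrightarrow>
        (\<forall>f\<in>parts I s. sigma I t u (sigma I s t f) = sigma I s u f)"
    and sim_parts_conflict: "\<forall>i j f g. (i, j) \<in> sim I \<longrightarrow> i \<noteq> j \<longrightarrow>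
        f \<in> parts I i \<longrightarrow> g \<in> parts I j \<longrightarrow> {f, g} \<in> Xs I"

lemma is_dci_dc_interpretation: "is_dci I \<Longrightarrow> dc_interpretation I"
  unfolding is_dci_def dc_interpretation_def by (elim conjE) (intro conjI; assumption)

context dc_interpretation
begin

lemma sim_in_range: "(i, j) \<in> sim I \<Longrightarrow> i \<in> {1..kk I} \<and> j \<in> {1..kk I}"
  using sim_equiv unfolding equiv_def refl_on_def by blast

lemma sim_refl: "i \<in> {1..kk I} \<Longrightarrow> (i, i) \<in> sim I"
  using sim_equiv unfolding equiv_def refl_on_def by blast

lemma sim_sym: "(i, j) \<in> sim I \<Longrightarrow> (j, i) \<in> sim I"
  using sim_equiv unfolding equiv_def sym_def by blast

lemma sim_trans: "(i, j) \<in> sim I \<Longrightarrow> (j, l) \<in> sim I \<Longrightarrow> (i, l) \<in> sim I"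
  using sim_equiv unfolding equiv_def trans_def by blast

lemma part_unique:
  "i \<in> {1..kk I} \<Longrightarrow> j \<in> {1..kk I} \<Longrightarrow> f \<in> parts I i \<Longrightarrow> f \<in> parts I j \<Longrightarrow> i = j"
  using parts_disjoint by blast

lemma pi_subset_feats: "pi I d \<subseteq> feats I"
  using pi_feats by blast

lemma sigma_in_parts: "(s, t) \<in> sim I \<Longrightarrow> f \<in> parts I s \<Longrightarrow> sigma I s t f \<in> parts I t"
  using sigma_bij bij_betwE by fast

lemma sigma_refl:
  assumes "s \<in> {1..kk I}" "f \<in> parts I s"
  shows "sigma I s s f = f"
proof -
  have ss: "(s, s) \<in> sim I" using sim_refl assms(1) .
  have "sigma I s s (sigma I s s f) = f" using sigma_inv ss assms(2) by blast
  moreover have "sigma I s s (sigma I s s f) = sigma I s s f" using sigma_trans ss assms(2) by blast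
  ultimately show ?thesis by simp
qed

lemma pi_similar_parts_eq:
  assumes "(i, j) \<in> sim I" "f \<in> parts I i" "g \<in> parts I j" "{f, g} \<subseteq> pi I d"
  shows "i = j"
  using sim_parts_conflict pi_consistent assms by blast

lemma phi_subset_feats: "phi I S \<subseteq> feats I"
  using pi_subset_feats unfolding phi_def by auto

lemma phi_antimono: "S \<subseteq> T \<Longrightarrow> phi I T \<subseteq> phi I S"
  using phi_subset_feats unfolding phi_def by auto

lemma sat_inclusion_phi: "sat_inclusion I C D \<Longrightarrow> phi I (ext I D) \<subseteq> phi I (ext I C)"
  unfolding sat_inclusion_def by (rule phi_antimono)

lemma feats_in_part:
  assumes "f \<in> feats I"
  obtains a where "a \<in> {1..kk I}" "f \<in> parts I a"
  using assms unfolding feats_def by blast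

lemma admissible_src_unique:
  assumes "admissible_U I U" "p \<in> U" "f \<in> parts I (fst p)" "s \<in> {1..kk I}" "f \<in> parts I s"
  shows "fst p = s"
proof -
  have "p \<in> sim I" using assms(1,2) unfolding admissible_U_def by blast
  then have "fst p \<in> {1..kk I}" using sim_in_range by (cases p) simp
  then show ?thesis using part_unique assms(3-5) by blast
qed

lemma dom_trans_src:
  assumes U: "admissible_U I U" and st: "(s, t) \<in> U" and f: "f \<in> parts I s"
  shows "dom_trans I U f = sigma I s t f"
proof -
  have "s \<in> {1..kk I}"
    using U st sim_in_range unfolding admissible_U_def by blast
  then have "p = (s, t)" if "p \<in> U \<and> f \<in> parts I (fst p)" for p
    using that admissible_src_unique[OF U _ _ _ f] U st
    unfolding admissible_U_def inj_on_def by (metis fst_conv)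
  then have "(THE p. p \<in> U \<and> f \<in> parts I (fst p)) = (s, t)"
    using st f by (intro the_equality) auto
  then show ?thesis using st f unfolding dom_trans_def Let_def by force
qed

lemma dom_trans_nonsrc:
  assumes "admissible_U I U" "s \<in> {1..kk I}" "s \<notin> fst ` U" "f \<in> parts I s"
  shows "dom_trans I U f = f"
proof -
  have "\<not> (\<exists>p\<in>U. f \<in> parts I (fst p))"
    using admissible_src_unique[OF assms(1) _ _ assms(2,4)] assms(3) by blast
  then show ?thesis unfolding dom_trans_def by simp
qed

lemma dom_trans_part_translation:
  assumes U: "admissible_U I U"
  shows "part_translation I (dom_trans I U)"
  unfolding part_translation_def
proof
  fix s assume s: "s \<in> {1..kk I}"
  show "\<exists>t. (s, t) \<in> sim I \<and> (\<forall>f\<in>parts I s. dom_trans I U f = sigma I s t f)"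
  proof (cases "s \<in> fst ` U")
    case True
    then obtain t where st: "(s, t) \<in> U" by force
    then have "(s, t) \<in> sim I" using U unfolding admissible_U_def by blast
    then show ?thesis using dom_trans_src[OF U st] by blast
  next
    case False
    then show ?thesis using dom_trans_nonsrc[OF U s False] sigma_refl s sim_refl by metis
  qed
qed

lemma mu_part_translation: "g \<in> mu I C D \<Longrightarrow> part_translation I g"
  unfolding mu_def using dom_trans_part_translation by blast

lemma mu_fixes_disjoint_parts:
  assumes "g \<in> mu I C D" "b \<in> {1..kk I}" "parts I b \<inter> phi I (ext I C) = {}" "f \<in> parts I b"
  shows "g f = f"
proof -
  obtain U where U: "g = dom_trans I U" "admissible_U I U" "fst ` U \<subseteq> delta I C"
    using assms(1) unfolding mu_def by blast
  have "b \<notin> fst ` U" using U(3) assms(3) unfolding delta_def by blast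
  then show ?thesis using dom_trans_nonsrc[OF U(2) assms(2) _ assms(4)] U(1) by simp
qed

lemma part_translation_maps_part:
  assumes "part_translation I g" "a \<in> {1..kk I}" "f \<in> parts I a"
  obtains b where "(a, b) \<in> sim I" "g f \<in> parts I b"
  using assms sigma_in_parts unfolding part_translation_def by metis

lemma part_translation_similar:
  assumes g: "part_translation I g" and "a \<in> {1..kk I}" "f \<in> parts I a"
    and "b \<in> {1..kk I}" "g f \<in> parts I b"
  shows "(a, b) \<in> sim I"
proof -
  obtain t where "(a, t) \<in> sim I" "g f \<in> parts I t"
    using part_translation_maps_part[OF assms(1-3)] .
  moreover have "t = b" using part_unique sim_in_range calculation assms(4,5) by blast
  ultimately show ?thesis by simp
qed

text \<open>On the part \<open>a\<close> both maps are bijections \<open>\<sigma>\<^bsub>(a,t)\<^esub>\<close>, and a single common image point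
  pins down \<open>t\<close>.\<close>
lemma part_translations_agree:
  assumes \<tau>: "part_translation I \<tau>" and \<rho>: "part_translation I \<rho>" and a: "a \<in> {1..kk I}"
    and "z \<in> parts I a" "w \<in> parts I a" "\<tau> w = \<rho> z" "f \<in> parts I a"
  shows "\<tau> f = \<rho> f"
proof -
  obtain t1 where t1: "(a, t1) \<in> sim I" "\<forall>f\<in>parts I a. \<tau> f = sigma I a t1 f"
    using \<tau> a unfolding part_translation_def by blast
  obtain t2 where t2: "(a, t2) \<in> sim I" "\<forall>f\<in>parts I a. \<rho> f = sigma I a t2 f"
    using \<rho> a unfolding part_translation_def by blast
  have "\<tau> w \<in> parts I t1" "\<rho> z \<in> parts I t2"
    using t1 t2 sigma_in_parts assms(4,5) by auto
  then have "t1 = t2" using part_unique sim_in_range t1(1) t2(1) assms(6) by metis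
  then show ?thesis using t1 t2 assms(7) by simp
qed

context
  fixes \<tau> \<rho> :: "'f \<Rightarrow> 'f" and c1 d1 :: "'f set" and x :: 'd
  assumes \<tau>: "part_translation I \<tau>" and \<rho>: "part_translation I \<rho>"
    and c1_pi: "c1 \<subseteq> pi I x" and d1_c1: "d1 \<subseteq> c1"
    and \<rho>_d1: "\<rho> ` d1 \<subseteq> \<tau> ` c1"
begin

lemma c1_similar_parts_eq:
  "(a, b) \<in> sim I \<Longrightarrow> f \<in> c1 \<Longrightarrow> g \<in> c1 \<Longrightarrow> f \<in> parts I a \<Longrightarrow> g \<in> parts I b \<Longrightarrow> a = b"
  using pi_similar_parts_eq c1_pi by blast

lemma translations_agree_on_meeting_part:
  assumes a: "a \<in> {1..kk I}" and z: "z \<in> d1" "z \<in> parts I a" and f: "f \<in> parts I a"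
  shows "\<tau> f = \<rho> f"
proof -
  obtain w where w: "w \<in> c1" "\<rho> z = \<tau> w" using \<rho>_d1 z(1) by blast
  obtain e where e: "e \<in> {1..kk I}" "w \<in> parts I e"
    using feats_in_part w(1) c1_pi pi_subset_feats by blast
  obtain t where t: "(a, t) \<in> sim I" "\<rho> z \<in> parts I t"
    using part_translation_maps_part[OF \<rho> a z(2)] .
  have "(e, t) \<in> sim I"
    using part_translation_similar[OF \<tau> e] t w(2) sim_in_range by metis
  then have "(a, e) \<in> sim I" using t(1) sim_sym sim_trans by blast
  then have "a = e" using c1_similar_parts_eq z w(1) e(2) d1_c1 by blast
  then show ?thesis using part_translations_agree[OF \<tau> \<rho> a z(2) _ _ f] e(2) w(2) by simp
qed

lemma translation_image_subset:
  assumes \<nu>: "part_translation I \<nu>" and d3: "d3 \<subseteq> \<nu> ` d1" "d3 \<subseteq> c3"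
    and \<rho>_fix: "\<And>b f. b \<in> {1..kk I} \<Longrightarrow> parts I b \<inter> d1 = {} \<Longrightarrow> f \<in> parts I b \<Longrightarrow> \<rho> f = f"
    and \<tau>_fix: "\<And>b f. b \<in> {1..kk I} \<Longrightarrow> parts I b \<inter> c1 = {} \<Longrightarrow> f \<in> parts I b \<Longrightarrow> \<tau> f = f"
  shows "\<rho> ` d3 \<subseteq> \<tau> ` c3"
proof
  fix u assume "u \<in> \<rho> ` d3"
  then obtain y where y: "y \<in> d3" "u = \<rho> y" by blast
  obtain z where z: "z \<in> d1" "y = \<nu> z" using y(1) d3(1) by blast
  obtain a where a: "a \<in> {1..kk I}" "z \<in> parts I a"
    using feats_in_part z(1) d1_c1 c1_pi pi_subset_feats by blast
  obtain b where b: "(a, b) \<in> sim I" "y \<in> parts I b"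
    using part_translation_maps_part[OF \<nu> a] z by metis
  have b_range: "b \<in> {1..kk I}" using b(1) sim_in_range by blast
  have "\<tau> y = \<rho> y"
  proof (cases "parts I b \<inter> d1 = {}")
    case True
    have "parts I b \<inter> c1 = {}"
    proof (rule ccontr)
      assume "parts I b \<inter> c1 \<noteq> {}"
      then have "a = b" using c1_similar_parts_eq b(1) z(1) a(2) d1_c1 by blast
      then show False using True z(1) a(2) by blast
    qed
    then show ?thesis using \<rho>_fix \<tau>_fix b_range True b(2) by metis
  next
    case False
    then show ?thesis using translations_agree_on_meeting_part b_range b(2) by blast
  qed
  then show "u \<in> \<tau> ` c3" using y d3(2) by (metis image_eqI subsetD)
qed

end

end

theorem proposition11:
  fixes I :: "('d, 'c, 'r, 'f) dci"
    and C1 C2 C3 C4 D1 D2 D3 D4 :: "('c, 'r) concept"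
  assumes "is_dci I"
    and "nat_fs I C1" "nat_fs I C2" "nat_fs I C3" "nat_fs I C4"
    and "nat_fs I D1" "nat_fs I D2" "nat_fs I D3" "nat_fs I D4"
    and "ext I C1 \<noteq> {}"
    and "sat_analogy I C1 C2 C3 C4"
    and "sat_analogy I D1 D2 D3 D4"
    and "sat_analogy I D1 D3 D2 D4"
    and "sat_inclusion I C1 D1" "sat_inclusion I C2 D2" "sat_inclusion I C3 D3"
  shows "sat_inclusion I C4 D4"
proof -
  interpret dc_interpretation I using assms(1) by (rule is_dci_dc_interpretation)
  obtain x where x: "x \<in> ext I C1" using assms(10) by blast
  obtain \<tau> where \<tau>: "\<tau> \<in> mu I C1 C2" "\<tau> \<in> mu I C3 C4"
    using assms(11) unfolding sat_analogy_def by blast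
  obtain \<rho> where \<rho>: "\<rho> \<in> mu I D1 D2" "\<rho> \<in> mu I D3 D4"
    using assms(12) unfolding sat_analogy_def by blast
  obtain \<nu> where \<nu>: "\<nu> \<in> mu I D1 D3"
    using assms(13) unfolding sat_analogy_def by blast
  note d_sub_c = assms(14-16)[THEN sat_inclusion_phi]
  have "\<rho> ` phi I (ext I D1) \<subseteq> \<tau> ` phi I (ext I C1)"
    unfolding mu_image[OF \<rho>(1), symmetric] mu_image[OF \<tau>(1), symmetric] by (rule d_sub_c(2))
  from translation_image_subset[OF mu_part_translation[OF \<tau>(1)] mu_part_translation[OF \<rho>(1)]
      phi_subset_pi[OF x] d_sub_c(1) this mu_part_translation[OF \<nu>] equalityD1[OF mu_image[OF \<nu>]]
      d_sub_c(3) mu_fixes_disjoint_parts[OF \<rho>(1)] mu_fixes_disjoint_parts[OF \<tau>(1)]]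
  have "phi I (ext I D4) \<subseteq> phi I (ext I C4)"
    unfolding mu_image[OF \<rho>(2)] mu_image[OF \<tau>(2)] .
  then show ?thesis
    using sat_inclusion_if_fully_specified assms(5,9) unfolding nat_fs_def by blast
qed

end
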